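(* Let $f:\mathbb{R}^n\to\mathbb{R}$ be convex and differentiable with $\nabla f$ $L$-Lipschitz continuous. Let $w^t\in\Delta^n$ and let $$w^{t+1}=w^t-\eta_t\,w^t\odot\Pi^t\nabla f^t$$ with $0<\eta_t\le\min\{1/L,\eta_{t,\max}\}$. Then $$f(w^{t+1})\le f(w^t)-\frac{\eta_t}{2}\operatorname{Var}[\nabla f^t\,|\,w^t].$$
   Context: $\Delta^n=\{w\in\mathbb{R}^n : \sum_i w_i=1,\ w_i\ge 0\}$. Write $\nabla f^t=\nabla f(w^t)$ and $(\Pi^t\nabla f^t)_i=\nabla_i f(w^t)-w^t\cdot\nabla f(w^t)$; $\odot$ is componentwise multiplication. $\eta_{t,\max}=1/\max_i(\nabla_i f(w^t)-w^t\cdot\nabla f(w^t))$, and $\operatorname{Var}[\nabla f^t\,|\,w^t]=\sum_i w^t_i\big(\nabla_i f(w^t)-w^t\cdot\nabla f(w^t)\big)^2$. *)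

theory Defs
  imports "HOL-Analysis.Analysis"
begin

definition prob_simplex :: "(real ^ 'n) set" where
  "prob_simplex = {w. (\<Sum>i\<in>UNIV. w $ i) = 1 \<and> (\<forall>i. 0 \<le> w $ i)}"

definition proj_grad :: "real ^ 'n \<Rightarrow> real ^ 'n \<Rightarrow> real ^ 'n" where
  "proj_grad w g = (\<chi> i. g $ i - w \<bullet> g)"

definition var_w :: "real ^ 'n \<Rightarrow> real ^ 'n \<Rightarrow> real" where
  "var_w w g = (\<Sum>i\<in>UNIV. w $ i * (g $ i - w \<bullet> g)^2)"

definition hadamard :: "real ^ 'n \<Rightarrow> real ^ 'n \<Rightarrow> real ^ 'n" where
  "hadamard a b = (\<chi> i. a $ i * b $ i)"

text \<open>Step-size constraint \<eta> \<le> \<eta>_max = 1 / max_i (\<Pi> g)_i, with the convention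
  1/0 = +\<infinity> (the maximum is always \<ge> 0 on the prob_simplex).\<close>
definition below_eta_max :: "real \<Rightarrow> real ^ 'n \<Rightarrow> real ^ 'n \<Rightarrow> bool" where
  "below_eta_max \<eta> w g = (\<eta> * (MAX i\<in>UNIV. proj_grad w g $ i) \<le> 1)"

end

theory Submission
  imports Defs
begin

text \<open>The step direction \<open>w \<odot> \<Pi>\<nabla>f\<close> has inner product \<open>Var[\<nabla>f | w]\<close> with the gradient and,
  because \<open>w\<^sub>i\<^sup>2 \<le> w\<^sub>i\<close> on the simplex, squared norm at most \<open>Var[\<nabla>f | w]\<close>. The descent lemma
  for an \<open>L\<close>-smooth function then gives the decrease \<open>\<eta> Var - L \<eta>\<^sup>2 Var / 2 \<ge> \<eta> Var / 2\<close>.\<close>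

lemma lipschitz_gradient_descent_bound:
  fixes f :: "'a::real_inner \<Rightarrow> real" and grad :: "'a \<Rightarrow> 'a"
  assumes grad: "\<And>x. (f has_derivative (\<lambda>h. grad x \<bullet> h)) (at x)"
    and lip: "L-lipschitz_on UNIV grad"
  shows "f (x + d) \<le> f x + grad x \<bullet> d + L / 2 * (d \<bullet> d)"
proof -
  \<comment> \<open>\<open>h\<close> is \<open>f\<close> on the segment minus its quadratic upper model; Lipschitz continuity
    of \<open>grad\<close> makes \<open>h' \<le> 0\<close> on \<open>(0,1)\<close>, so the mean value theorem gives \<open>h 1 \<le> h 0\<close>.\<close>
  define h where "h t = f (x + t *\<^sub>R d) - t * (grad x \<bullet> d) - L / 2 * t\<^sup>2 * (d \<bullet> d)" for t
  define h' where "h' t = (grad (x + t *\<^sub>R d) - grad x) \<bullet> d - L * t * (d \<bullet> d)" for t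
  have h_deriv: "(h has_real_derivative h' t) (at t)" for t
  proof -
    have "((\<lambda>t. x + t *\<^sub>R d) has_derivative (\<lambda>s. s *\<^sub>R d)) (at t)"
      by (auto intro!: derivative_eq_intros)
    from has_derivative_compose[OF this grad]
    have "((\<lambda>t. f (x + t *\<^sub>R d)) has_real_derivative grad (x + t *\<^sub>R d) \<bullet> d) (at t)"
      by (simp add: o_def has_field_derivative_def mult_commute_abs)
    then show ?thesis unfolding h_def h'_def
      by (auto intro!: derivative_eq_intros simp: power2_eq_square algebra_simps inner_diff_left)
  qed
  obtain z where z: "0 < z" "z < 1" "h 1 - h 0 = h' z"
    using MVT2[of 0 1 h h'] h_deriv by auto
  have "(grad (x + z *\<^sub>R d) - grad x) \<bullet> d \<le> norm (grad (x + z *\<^sub>R d) - grad x) * norm d"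
    by (rule norm_cauchy_schwarz)
  also have "\<dots> \<le> L * norm (z *\<^sub>R d) * norm d"
    using lipschitz_onD[OF lip, of "x + z *\<^sub>R d" x] by (simp add: dist_norm mult_right_mono)
  also have "\<dots> = L * z * (d \<bullet> d)"
    using z by (simp add: power2_norm_eq_inner[symmetric] power2_eq_square)
  finally have "h' z \<le> 0" unfolding h'_def by simp
  with z have "h 1 \<le> h 0" by simp
  then show ?thesis unfolding h_def by simp
qed

lemma prob_simplex_nonneg: "w \<in> prob_simplex \<Longrightarrow> 0 \<le> w $ i"
  by (simp add: prob_simplex_def)

lemma prob_simplex_le_1:
  assumes "w \<in> prob_simplex"
  shows "w $ i \<le> 1"
proof -
  have "w $ i \<le> (\<Sum>j\<in>UNIV. w $ j)"
    using assms by (intro member_le_sum) (auto simp: prob_simplex_nonneg)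
  then show ?thesis using assms by (simp add: prob_simplex_def)
qed

lemma var_w_nonneg: "w \<in> prob_simplex \<Longrightarrow> 0 \<le> var_w w g"
  unfolding var_w_def by (intro sum_nonneg) (simp add: prob_simplex_nonneg)

lemma sum_centered_prob_simplex:
  assumes "w \<in> prob_simplex"
  shows "(\<Sum>i\<in>UNIV. w $ i * (g $ i - w \<bullet> g)) = 0"
  using assms
  by (simp add: right_diff_distrib sum_subtractf sum_distrib_right[symmetric]
      inner_vec_def prob_simplex_def)

lemma inner_hadamard_proj_grad:
  assumes "w \<in> prob_simplex"
  shows "g \<bullet> hadamard w (proj_grad w g) = var_w w g"
proof -
  let ?m = "w \<bullet> g"
  have "g \<bullet> hadamard w (proj_grad w g) = (\<Sum>i\<in>UNIV. w $ i * g $ i * (g $ i - ?m))"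
    by (simp add: inner_vec_def hadamard_def proj_grad_def algebra_simps)
  also have "\<dots> = var_w w g + ?m * (\<Sum>i\<in>UNIV. w $ i * (g $ i - ?m))"
    by (simp add: var_w_def sum_distrib_left sum.distrib[symmetric] power2_eq_square
        algebra_simps)
  finally show ?thesis using sum_centered_prob_simplex[OF assms] by simp
qed

lemma inner_self_hadamard_proj_grad_le:
  assumes "w \<in> prob_simplex"
  shows "hadamard w (proj_grad w g) \<bullet> hadamard w (proj_grad w g) \<le> var_w w g"
proof -
  let ?d = "hadamard w (proj_grad w g)"
  have "?d \<bullet> ?d = (\<Sum>i\<in>UNIV. (w $ i)\<^sup>2 * (g $ i - w \<bullet> g)\<^sup>2)"
    unfolding inner_vec_def[of ?d]
    by (simp add: hadamard_def proj_grad_def power2_eq_square mult_ac)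
  also have "\<dots> \<le> var_w w g"
    unfolding var_w_def
  proof (intro sum_mono mult_right_mono)
    fix i
    show "(w $ i)\<^sup>2 \<le> w $ i"
      using prob_simplex_nonneg[OF assms] prob_simplex_le_1[OF assms]
      by (simp add: power2_eq_square mult_left_le)
  qed simp
  finally show ?thesis .
qed

theorem theoremA2:
  fixes f :: "real ^ 'n \<Rightarrow> real"
    and grad :: "real ^ 'n \<Rightarrow> real ^ 'n"
    and L \<eta> :: real
    and w :: "real ^ 'n"
  assumes cvx: "convex_on UNIV f"
    and grad: "\<And>x. (f has_derivative (\<lambda>h. grad x \<bullet> h)) (at x)"
    and lip: "L > 0" "L-lipschitz_on UNIV grad"
    and w: "w \<in> prob_simplex"
    and eta_pos: "0 < \<eta>"
    and eta_L: "\<eta> \<le> 1 / L"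
    and eta_max: "below_eta_max \<eta> w (grad w)"
  shows "f (w - \<eta> *\<^sub>R hadamard w (proj_grad w (grad w)))
           \<le> f w - \<eta> / 2 * var_w w (grad w)"
proof -
  define V where "V = var_w w (grad w)"
  define d where "d = hadamard w (proj_grad w (grad w))"
  have "f (w - \<eta> *\<^sub>R d) \<le> f w + grad w \<bullet> (- \<eta> *\<^sub>R d) + L / 2 * ((\<eta> *\<^sub>R d) \<bullet> (\<eta> *\<^sub>R d))"
    using lipschitz_gradient_descent_bound[OF grad lip(2), of w "- \<eta> *\<^sub>R d"] by simp
  also have "\<dots> = f w - \<eta> * V + L * \<eta>\<^sup>2 / 2 * (d \<bullet> d)"
    using inner_hadamard_proj_grad[OF w] by (simp add: V_def d_def power2_eq_square)
  also have "\<dots> \<le> f w - \<eta> * V + L * \<eta>\<^sup>2 / 2 * V"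
    using inner_self_hadamard_proj_grad_le[OF w] lip(1)
    by (simp add: V_def d_def mult_left_mono)
  also have "\<dots> \<le> f w - \<eta> / 2 * V"
  proof -
    have "L * \<eta> \<le> 1" using eta_L lip(1) by (simp add: field_simps)
    moreover have "0 \<le> \<eta> * V" "0 \<le> L * \<eta>"
      using var_w_nonneg[OF w] eta_pos lip(1) by (simp_all add: V_def)
    ultimately have "(L * \<eta>) * (\<eta> * V) \<le> \<eta> * V"
      by (intro mult_left_le_one_le)
    then show ?thesis by (simp add: power2_eq_square algebra_simps)
  qed
  finally show ?thesis by (simp add: V_def d_def)
qed

end
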